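(* Let $H$ be a finite-dimensional real or complex Hilbert space with inner product $(\cdot,\cdot)$ and norm $\|u\|=(u,u)^{1/2}$, and let $A:H\to H$ be a self-adjoint operator with eigenvalues $0<\lambda_1\le\lambda_2\le\dots\le\lambda_K$, so that $A\ge\delta I$ with $\delta=\lambda_1>0$. Let $f:[\lambda_1,\lambda_K]\to(0,\infty)$, and for $\varphi\in H$ let $u=f(A)^{-1}\varphi$ be the solution of $f(A)u=\varphi$. Let $m\ge1$ and let $a_0$ and $a_i,b_i,c_i,d_i$, $i=1,\dots,m$, be real numbers with $a_i-\delta b_i\ge0$, $c_i-\delta d_i>0$, and such that the operators $c_iI+d_iA$ are positive definite, $i=1,\dots,m$. Let $$s(\lambda)=a_0+\sum_{i=1}^m\frac{a_i+b_i\lambda}{c_i+d_i\lambda},$$ and assume that for some $\varepsilon_1\ge0$ $$|s(\lambda)-\log f(\lambda)|\le\varepsilon_1\quad\text{for all }\lambda\in[\lambda_1,\lambda_K].$$ Define piecewise constant coefficients $(a(t),b(t),c(t),d(t))=(a_i,b_i,c_i,d_i)$ for $i-1<t\le i$, $i=1,\dots,m$, and let $w:[0,m]\to H$ be the (continuous) solution of $$\big(c(t)I+d(t)A\big)\frac{dw}{dt}+\big(a(t)I+b(t)A\big)w=0,\quad 0<t\le m,\qquad w(0)=e^{-a_0}\varphi.$$ Let $\tilde w(m)\in H$ satisfy $\|\tilde w(m)-w(m)\|\le\varepsilon_0\|\varphi\|$ for some $\varepsilon_0\ge0$, and set $\hat u=\tilde w(m)$. Then $$\|\hat u-u\|\l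e\varepsilon_0\|\varphi\|+\big(e^{\varepsilon_1}-1\big)\|\varphi\|_{f^{-2}(A)}.$$
   Context: Operator functions are defined spectrally: if $\psi_k$ ($\|\psi_k\|=1$) are orthonormal eigenvectors of $A$ with $A\psi_k=\lambda_k\psi_k$, then $g(A)v=\sum_{k=1}^K g(\lambda_k)(v,\psi_k)\psi_k$. For a self-adjoint positive definite operator $D$ on $H$, $\|v\|_D=(Dv,v)^{1/2}$; here $f^{-2}(A)=\sum_k f(\lambda_k)^{-2}(\cdot,\psi_k)\psi_k$, so $\|\varphi\|_{f^{-2}(A)}=\|f(A)^{-1}\varphi\|$. *)

theory Defs
  imports "HOL-Analysis.Analysis"
begin

text \<open>The finite-dimensional (complex) Hilbert space H is modelled as complex^'n
  with the standard Hermitian inner product; the library norm on complex^'n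
  coincides with the induced norm sqrt((u,u)).\<close>

definition cinner :: "complex^'n \<Rightarrow> complex^'n \<Rightarrow> complex" where
  "cinner u v = (\<Sum>i\<in>UNIV. u $ i * cnj (v $ i))"

text \<open>Operator function defined spectrally from an orthonormal eigensystem
  (psi k, lam k), k < K:  g(A) v = sum_k g(lam k) (v, psi k) psi k.\<close>

definition opfun :: "(real \<Rightarrow> real) \<Rightarrow> nat \<Rightarrow> (nat \<Rightarrow> real) \<Rightarrow> (nat \<Rightarrow> complex^'n)
    \<Rightarrow> complex^'n \<Rightarrow> complex^'n" where
  "opfun g K lam psi v = (\<Sum>k<K. (complex_of_real (g (lam k)) * cinner v (psi k)) *s psi k)"

definition Dnorm :: "(complex^'n \<Rightarrow> complex^'n) \<Rightarrow> complex^'n \<Rightarrow> real" where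
  "Dnorm D v = sqrt (Re (cinner (D v) v))"

end

theory Submission
  imports Defs
begin

(* In the eigenbasis psi_k of A the evolution equation decouples: on the i-th unit interval the
   k-th coefficient of w solves y' = -r_i(lam_k) y with r_i(x) = (a_i + b_i x) / (c_i + d_i x),
   so w(m) = exp(-s(A)) phi, while u = f(A)^-1 phi. Hence w(m) - u = (exp(-s) - 1/f)(A) phi.
   Since |s - ln f| <= eps1 on the spectrum, |exp(-s) - 1/f| <= (exp eps1 - 1) / f there, and
   Parseval turns this pointwise bound into the bound in the f^-2(A)-norm; the triangle
   inequality adds the error eps0 ||phi|| of the approximate solution. *)

lemma cinner_zero_left [simp]: "cinner 0 z = 0"
  by (simp add: cinner_def)

lemma cinner_add_left: "cinner (x + y) z = cinner x z + cinner y z"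
  by (simp add: cinner_def sum.distrib algebra_simps)

lemma cinner_diff_left: "cinner (x - y) z = cinner x z - cinner y z"
  by (simp add: cinner_def sum_subtractf algebra_simps)

lemma cinner_scale_left: "cinner (c *s x) z = c * cinner x z"
  by (simp add: cinner_def sum_distrib_left algebra_simps)

lemma cinner_sum_left: "cinner (\<Sum>k\<in>S. f k) z = (\<Sum>k\<in>S. cinner (f k) z)"
  by (induction S rule: infinite_finite_induct) (auto simp: cinner_add_left)

lemma cinner_scale_right: "cinner z (c *s x) = cnj c * cinner z x"
  by (simp add: cinner_def sum_distrib_left algebra_simps)

lemma cinner_commute: "cinner y x = cnj (cinner x y)"
  by (simp add: cinner_def mult.commute)

lemma cinner_self: "cinner x x = complex_of_real (norm x ^ 2)"
proof -
  have "norm x ^ 2 = (\<Sum>i\<in>UNIV. norm (x $ i) ^ 2)"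
    by (simp add: norm_vec_def L2_set_def sum_nonneg)
  moreover have "x $ i * cnj (x $ i) = complex_of_real (norm (x $ i) ^ 2)" for i
    by (rule complex_norm_square[symmetric])
  ultimately show ?thesis
    by (simp add: cinner_def)
qed

lemma cinner_self_eq_0_iff [simp]: "cinner x x = 0 \<longleftrightarrow> x = 0"
  by (simp add: cinner_self)

lemma bounded_linear_cinner_left: "bounded_linear (\<lambda>x. cinner x z)"
  unfolding cinner_def
  by (intro bounded_linear_sum bounded_linear_mult_const bounded_linear_vec_nth)

definition orthonormal_seq :: "nat \<Rightarrow> (nat \<Rightarrow> complex^'n) \<Rightarrow> bool" where
  "orthonormal_seq K psi \<longleftrightarrow>
     (\<forall>j<K. \<forall>k<K. cinner (psi j) (psi k) = (if j = k then 1 else 0))"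

lemma pairwise_orthogonal_independent:
  fixes S :: "(complex^'n) set"
  assumes "finite S" and "0 \<notin> S"
    and orth: "\<And>x y. x \<in> S \<Longrightarrow> y \<in> S \<Longrightarrow> x \<noteq> y \<Longrightarrow> cinner x y = 0"
  shows "vec.independent S"
  unfolding vec.independent_explicit
proof (intro conjI assms allI impI ballI)
  fix c y assume lin: "(\<Sum>v\<in>S. c v *s v) = 0" and y: "y \<in> S"
  have "0 = cinner (\<Sum>v\<in>S. c v *s v) y"
    using lin by simp
  also have "\<dots> = (\<Sum>v\<in>S. c v * cinner v y)"
    by (simp add: cinner_sum_left cinner_scale_left)
  also have "\<dots> = c y * cinner y y"
    by (subst sum.remove[OF assms(1) y]) (auto intro!: sum.neutral simp: orth y)
  finally show "c y = 0"
    using y \<open>0 \<notin> S\<close> by auto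
qed

lemma orthonormal_seq_cinner_sum:
  assumes "orthonormal_seq K psi" and "k < K"
  shows "cinner (\<Sum>j<K. \<alpha> j *s psi j) (psi k) = \<alpha> k"
proof -
  have "cinner (\<Sum>j<K. \<alpha> j *s psi j) (psi k) = (\<Sum>j<K. \<alpha> j * (if j = k then 1 else 0))"
    using assms by (simp add: orthonormal_seq_def cinner_sum_left cinner_scale_left)
  also have "\<dots> = \<alpha> k"
    using \<open>k < K\<close> by (simp add: if_distrib cong: if_cong)
  finally show ?thesis .
qed

lemma orthonormal_seq_complete:
  fixes psi :: "nat \<Rightarrow> complex^'n"
  assumes K: "K = CARD('n)" and orth: "orthonormal_seq K psi"
    and v: "\<And>k. k < K \<Longrightarrow> cinner v (psi k) = 0"
  shows "v = 0"
proof (rule ccontr)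
  assume "v \<noteq> 0"
  define S where "S = insert v (psi ` {..<K})"
  have "inj_on psi {..<K}"
    using orth by (intro inj_onI) (metis orthonormal_seq_def lessThan_iff one_neq_zero)
  moreover have "v \<notin> psi ` {..<K}"
    using v orth by (fastforce simp: orthonormal_seq_def)
  ultimately have "card S = K + 1"
    by (simp add: S_def card_image)
  moreover have "vec.independent S"
  proof (rule pairwise_orthogonal_independent)
    show "finite S"
      by (simp add: S_def)
    show "0 \<notin> S"
      using \<open>v \<noteq> 0\<close> orth by (force simp: S_def orthonormal_seq_def)
    show "cinner x y = 0" if "x \<in> S" "y \<in> S" "x \<noteq> y" for x y
      using that v orth by (auto simp: S_def orthonormal_seq_def cinner_commute[of v])
  qed
  then have "card S \<le> CARD('n)"
    using vec.independent_card_le_dim[OF order_refl] dim_subset_UNIV_cart_gen order_trans by blast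
  ultimately show False
    using K by simp
qed

lemma orthonormal_seq_expansion:
  fixes psi :: "nat \<Rightarrow> complex^'n"
  assumes "K = CARD('n)" and orth: "orthonormal_seq K psi"
  shows "v = (\<Sum>k<K. cinner v (psi k) *s psi k)"
proof -
  have "v - (\<Sum>k<K. cinner v (psi k) *s psi k) = 0"
    by (rule orthonormal_seq_complete[OF assms])
      (simp add: cinner_diff_left orthonormal_seq_cinner_sum[OF orth])
  then show ?thesis
    by simp
qed

lemma orthonormal_seq_norm_sum:
  assumes orth: "orthonormal_seq K psi"
  shows "norm (\<Sum>k<K. \<alpha> k *s psi k) = sqrt (\<Sum>k<K. cmod (\<alpha> k) ^ 2)"
proof -
  let ?x = "\<Sum>k<K. \<alpha> k *s psi k"
  have "complex_of_real (norm ?x ^ 2) = (\<Sum>k<K. \<alpha> k * cinner (psi k) ?x)"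
    unfolding cinner_self[symmetric] by (simp add: cinner_sum_left cinner_scale_left)
  also have "\<dots> = (\<Sum>k<K. complex_of_real (cmod (\<alpha> k) ^ 2))"
    using orth by (intro sum.cong) (simp_all add: cinner_commute[of "psi _"] orthonormal_seq_cinner_sum complex_norm_square[symmetric])
  finally have "norm ?x ^ 2 = (\<Sum>k<K. cmod (\<alpha> k) ^ 2)"
    by (simp only: of_real_sum[symmetric] of_real_eq_iff)
  then show ?thesis
    by (simp add: real_sqrt_unique)
qed

lemma cinner_opfun_eigenvector:
  assumes "orthonormal_seq K psi" and "k < K"
  shows "cinner (opfun g K lam psi v) (psi k) = complex_of_real (g (lam k)) * cinner v (psi k)"
  unfolding opfun_def using assms by (rule orthonormal_seq_cinner_sum)

lemma opfun_eqI:
  fixes psi :: "nat \<Rightarrow> complex^'n"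
  assumes "K = CARD('n)" and "orthonormal_seq K psi"
    and coeff: "\<And>k. k < K \<Longrightarrow> cinner x (psi k) = complex_of_real (g (lam k)) * cinner v (psi k)"
  shows "x = opfun g K lam psi v"
proof -
  have "x = (\<Sum>k<K. cinner x (psi k) *s psi k)"
    using assms(1,2) by (rule orthonormal_seq_expansion)
  also have "\<dots> = opfun g K lam psi v"
    unfolding opfun_def by (intro sum.cong) (simp_all add: coeff)
  finally show ?thesis .
qed

lemma opfun_diff:
  "opfun g K lam psi v - opfun h K lam psi v = opfun (\<lambda>x. g x - h x) K lam psi v"
  by (simp add: opfun_def sum_subtractf vector_sub_rdistrib algebra_simps)

lemma opfun_inverse:
  fixes psi :: "nat \<Rightarrow> complex^'n"
  assumes K: "K = CARD('n)" and orth: "orthonormal_seq K psi"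
    and nz: "\<And>k. k < K \<Longrightarrow> g (lam k) \<noteq> 0" and sol: "opfun g K lam psi u = v"
  shows "u = opfun (\<lambda>x. inverse (g x)) K lam psi v"
proof (rule opfun_eqI[OF K orth])
  fix k assume k: "k < K"
  have "cinner v (psi k) = complex_of_real (g (lam k)) * cinner u (psi k)"
    using cinner_opfun_eigenvector[OF orth k, of g lam u] sol by simp
  then show "cinner u (psi k) = complex_of_real (inverse (g (lam k))) * cinner v (psi k)"
    using nz[OF k] by (simp add: field_simps)
qed

lemma Dnorm_opfun:
  "Dnorm (opfun g K lam psi) v = sqrt (\<Sum>k<K. g (lam k) * cmod (cinner v (psi k)) ^ 2)"
proof -
  have "cinner (opfun g K lam psi v) v = (\<Sum>k<K. complex_of_real (g (lam k) * cmod (cinner v (psi k)) ^ 2))"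
    unfolding opfun_def
    by (simp add: cinner_sum_left cinner_scale_left cinner_commute[of "psi _"] complex_norm_square[symmetric] mult.assoc)
  then show ?thesis
    by (simp add: Dnorm_def)
qed

lemma norm_opfun_le_Dnorm:
  assumes orth: "orthonormal_seq K psi" and "0 \<le> C"
    and bound: "\<And>k. k < K \<Longrightarrow> \<bar>g (lam k)\<bar> \<le> C * \<bar>h (lam k)\<bar>"
  shows "norm (opfun g K lam psi v) \<le> C * Dnorm (opfun (\<lambda>x. h x ^ 2) K lam psi) v"
proof -
  have "(\<Sum>k<K. cmod (complex_of_real (g (lam k)) * cinner v (psi k)) ^ 2)
      \<le> (\<Sum>k<K. C\<^sup>2 * (h (lam k) ^ 2 * cmod (cinner v (psi k)) ^ 2))"
  proof (rule sum_mono)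
    fix k assume "k \<in> {..<K}"
    then have "\<bar>g (lam k)\<bar> * cmod (cinner v (psi k)) \<le> C * \<bar>h (lam k)\<bar> * cmod (cinner v (psi k))"
      using bound by (simp add: mult_right_mono)
    then have "(\<bar>g (lam k)\<bar> * cmod (cinner v (psi k)))\<^sup>2 \<le> (C * \<bar>h (lam k)\<bar> * cmod (cinner v (psi k)))\<^sup>2"
      by (rule power_mono) simp
    then show "cmod (complex_of_real (g (lam k)) * cinner v (psi k)) ^ 2
        \<le> C\<^sup>2 * (h (lam k) ^ 2 * cmod (cinner v (psi k)) ^ 2)"
      by (simp add: norm_mult power_mult_distrib)
  qed
  then have "sqrt (\<Sum>k<K. cmod (complex_of_real (g (lam k)) * cinner v (psi k)) ^ 2)
      \<le> sqrt (C\<^sup>2 * (\<Sum>k<K. h (lam k) ^ 2 * cmod (cinner v (psi k)) ^ 2))"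
    by (simp add: sum_distrib_left)
  also have "\<dots> = C * sqrt (\<Sum>k<K. h (lam k) ^ 2 * cmod (cinner v (psi k)) ^ 2)"
    using \<open>0 \<le> C\<close> by (simp add: real_sqrt_mult)
  finally show ?thesis
    unfolding Dnorm_opfun opfun_def orthonormal_seq_norm_sum[OF orth] .
qed

lemma abs_exp_minus_one_le:
  fixes t e :: real
  assumes "\<bar>t\<bar> \<le> e"
  shows "\<bar>exp t - 1\<bar> \<le> exp e - 1"
proof (cases "0 \<le> t")
  case True
  then show ?thesis
    using assms by simp
next
  case False
  have "exp (- e) \<le> exp t" and "1 - e \<le> exp (- e)" and "1 + e \<le> exp e" and "exp t < 1"
    using assms False exp_ge_add_one_self[of "- e"] exp_ge_add_one_self[of e] by simp_all
  then show ?thesis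
    by linarith
qed

lemma abs_exp_neg_minus_inverse_le:
  fixes F S e :: real
  assumes "0 < F" and "\<bar>S - ln F\<bar> \<le> e"
  shows "\<bar>exp (- S) - inverse F\<bar> \<le> (exp e - 1) * inverse F"
proof -
  have "exp (ln F - S) = F * exp (- S)"
    using \<open>0 < F\<close> by (simp add: exp_diff exp_minus divide_inverse)
  then have "exp (- S) - inverse F = (exp (ln F - S) - 1) * inverse F"
    using \<open>0 < F\<close> by (simp add: field_simps)
  moreover have "\<bar>exp (ln F - S) - 1\<bar> \<le> exp e - 1"
    using assms(2) by (intro abs_exp_minus_one_le) linarith
  ultimately show ?thesis
    using \<open>0 < F\<close> by (simp add: abs_mult mult_right_mono)
qed


lemma exp_decay_solution_unique:
  fixes y :: "real \<Rightarrow> 'a::banach"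
  assumes "t0 \<le> t1" and cont: "continuous_on {t0..t1} y"
    and der: "\<And>t. t \<in> {t0<..t1} \<Longrightarrow> (y has_vector_derivative (- r) *\<^sub>R y t) (at t within {t0..t1})"
  shows "y t1 = exp (- r * (t1 - t0)) *\<^sub>R y t0"
proof -
  define g where "g t = exp (r * (t - t0)) *\<^sub>R y t" for t
  have "g t1 = g t0"
  proof (rule has_derivative_zero_unique_strong_interval[of "{t0}"])
    show "continuous_on {t0..t1} g"
      unfolding g_def by (intro continuous_intros cont)
    fix t assume t: "t \<in> {t0..t1} - {t0}"
    have "((\<lambda>t. exp (r * (t - t0))) has_real_derivative exp (r * (t - t0)) * r) (at t within {t0..t1})"
      by (auto intro!: derivative_eq_intros)
    from has_vector_derivative_scaleR[OF this der] t
    have "(g has_vector_derivative 0) (at t within {t0..t1})"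
      by (simp add: g_def[abs_def])
    then show "(g has_derivative (\<lambda>h. 0)) (at t within {t0..t1})"
      by (simp add: has_vector_derivative_def)
  qed (use assms in auto)
  have "y t1 = (exp (- r * (t1 - t0)) * exp (r * (t1 - t0))) *\<^sub>R y t1"
    by (simp add: exp_add[symmetric])
  also have "\<dots> = exp (- r * (t1 - t0)) *\<^sub>R g t1"
    by (simp add: g_def)
  also have "g t1 = y t0"
    using \<open>g t1 = g t0\<close> by (simp add: g_def)
  finally show ?thesis .
qed

lemma posdef_eigenvalue_pos:
  fixes A :: "complex^'n^'n"
  assumes posdef: "\<And>v. v \<noteq> 0 \<Longrightarrow>
      0 < Re (cinner (complex_of_real c *s v + complex_of_real d *s (A *v v)) v)"
    and eig: "A *v p = complex_of_real la *s p" and norm_p: "cinner p p = 1"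
  shows "0 < c + d * la"
proof -
  have "p \<noteq> 0"
    using norm_p by auto
  from posdef[OF this] show ?thesis
    using eig norm_p by (simp add: cinner_add_left cinner_scale_left)
qed

lemma eigencomponent_ode_step:
  fixes A :: "complex^'n^'n" and w :: "real \<Rightarrow> complex^'n"
  assumes selfadj: "\<And>x y. cinner (A *v x) y = cinner x (A *v y)"
    and eig: "A *v p = complex_of_real la *s p" and denom: "c + d * la \<noteq> 0"
    and "t0 \<le> t1" and cont: "continuous_on {t0..t1} w"
    and ode: "\<And>t. t \<in> {t0<..t1} \<Longrightarrow>
        \<exists>w'. (w has_vector_derivative w') (at t within {t0..t1}) \<and>
             complex_of_real c *s w' + complex_of_real d *s (A *v w')
             + (complex_of_real a *s w t + complex_of_real b *s (A *v w t)) = 0"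
  shows "cinner (w t1) p
    = complex_of_real (exp (- ((a + b * la) / (c + d * la)) * (t1 - t0))) * cinner (w t0) p"
proof -
  define r where "r = (a + b * la) / (c + d * la)"
  have A_left: "cinner (A *v x) p = complex_of_real la * cinner x p" for x
    by (simp add: selfadj eig cinner_scale_right)
  have "cinner (w t1) p = exp (- r * (t1 - t0)) *\<^sub>R cinner (w t0) p"
  proof (rule exp_decay_solution_unique[OF \<open>t0 \<le> t1\<close>])
    show "continuous_on {t0..t1} (\<lambda>t. cinner (w t) p)"
      by (rule bounded_linear.continuous_on[OF bounded_linear_cinner_left cont])
    fix t assume "t \<in> {t0<..t1}"
    then obtain w' where w': "(w has_vector_derivative w') (at t within {t0..t1})"
      and eq: "complex_of_real c *s w' + complex_of_real d *s (A *v w')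
             + (complex_of_real a *s w t + complex_of_real b *s (A *v w t)) = 0"
      using ode by blast
    have "cinner (complex_of_real c *s w' + complex_of_real d *s (A *v w')
             + (complex_of_real a *s w t + complex_of_real b *s (A *v w t))) p = 0"
      by (simp only: eq cinner_zero_left)
    then have "complex_of_real (c + d * la) * cinner w' p
        + complex_of_real (a + b * la) * cinner (w t) p = 0"
      by (simp add: cinner_add_left cinner_scale_left A_left algebra_simps)
    then have "complex_of_real (c + d * la) * cinner w' p
        = - (complex_of_real (a + b * la) * cinner (w t) p)"
      by (simp add: eq_neg_iff_add_eq_0)
    then have "cinner w' p = - (complex_of_real (a + b * la) * cinner (w t) p) / complex_of_real (c + d * la)"
      using denom nonzero_eq_divide_eq[of "complex_of_real (c + d * la)"]
      by (metis mult.commute of_real_eq_0_iff)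
    then have "cinner w' p = (- r) *\<^sub>R cinner (w t) p"
      by (simp add: r_def scaleR_conv_of_real)
    then show "((\<lambda>t. cinner (w t) p) has_vector_derivative (- r) *\<^sub>R cinner (w t) p) (at t within {t0..t1})"
      using bounded_linear.has_vector_derivative[OF bounded_linear_cinner_left w', of p] by simp
  qed
  then show ?thesis
    by (simp add: r_def scaleR_conv_of_real)
qed

lemma eigencomponent_piecewise_ode:
  fixes A :: "complex^'n^'n" and w :: "real \<Rightarrow> complex^'n"
  assumes selfadj: "\<And>x y. cinner (A *v x) y = cinner x (A *v y)"
    and eig: "A *v p = complex_of_real la *s p"
    and denom: "\<And>i. i \<in> {1..m} \<Longrightarrow> c i + d i * la \<noteq> 0"
    and cont: "continuous_on {0 .. real m} w"
    and ode: "\<And>i t. i \<in> {1..m} \<Longrightarrow> t \<in> {real i - 1 <.. real i} \<Longrightarrow>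
        \<exists>w'. (w has_vector_derivative w') (at t within {real i - 1 .. real i}) \<and>
             complex_of_real (c i) *s w' + complex_of_real (d i) *s (A *v w')
             + (complex_of_real (a i) *s w t + complex_of_real (b i) *s (A *v w t)) = 0"
    and "j \<le> m"
  shows "cinner (w (real j)) p
    = complex_of_real (exp (- (\<Sum>i=1..j. (a i + b i * la) / (c i + d i * la)))) * cinner (w 0) p"
  using \<open>j \<le> m\<close>
proof (induction j)
  case 0
  then show ?case
    by simp
next
  case (Suc j)
  then have i: "Suc j \<in> {1..m}"
    by simp
  let ?r = "\<lambda>i. (a i + b i * la) / (c i + d i * la)"
  have "cinner (w (real (Suc j))) p = complex_of_real (exp (- ?r (Suc j))) * cinner (w (real j)) p"
    using eigencomponent_ode_step[OF selfadj eig denom[OF i], of "real (Suc j) - 1" "real (Suc j)" w]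
      continuous_on_subset[OF cont] ode[OF i] Suc.prems
    by simp
  also have "\<dots> = complex_of_real (exp (- ?r (Suc j)) * exp (- (\<Sum>i=1..j. ?r i))) * cinner (w 0) p"
    using Suc by simp
  also have "exp (- ?r (Suc j)) * exp (- (\<Sum>i=1..j. ?r i)) = exp (- (\<Sum>i=1..Suc j. ?r i))"
    by (simp add: exp_add[symmetric])
  finally show ?case .
qed

lemma piecewise_ode_endpoint_eq_opfun:
  fixes A :: "complex^'n^'n" and w :: "real \<Rightarrow> complex^'n"
  assumes K: "K = CARD('n)" and orth: "orthonormal_seq K psi"
    and selfadj: "\<And>x y. cinner (A *v x) y = cinner x (A *v y)"
    and eigen: "\<And>k. k < K \<Longrightarrow> A *v psi k = complex_of_real (lam k) *s psi k"
    and posdef: "\<And>i v. i \<in> {1..m} \<Longrightarrow> v \<noteq> 0 \<Longrightarrow>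
        Re (cinner (complex_of_real (c i) *s v + complex_of_real (d i) *s (A *v v)) v) > 0"
    and cont: "continuous_on {0 .. real m} w"
    and init: "w 0 = complex_of_real (exp (- a0)) *s \<phi>"
    and ode: "\<And>i t. i \<in> {1..m} \<Longrightarrow> t \<in> {real i - 1 <.. real i} \<Longrightarrow>
        \<exists>w'. (w has_vector_derivative w') (at t within {real i - 1 .. real i}) \<and>
             complex_of_real (c i) *s w' + complex_of_real (d i) *s (A *v w')
             + (complex_of_real (a i) *s w t + complex_of_real (b i) *s (A *v w t)) = 0"
  shows "w (real m)
    = opfun (\<lambda>x. exp (- (a0 + (\<Sum>i=1..m. (a i + b i * x) / (c i + d i * x))))) K lam psi \<phi>"
proof (rule opfun_eqI[OF K orth])
  fix k assume k: "k < K"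
  let ?r = "\<lambda>i. (a i + b i * lam k) / (c i + d i * lam k)"
  have "cinner (psi k) (psi k) = 1"
    using orth k by (simp add: orthonormal_seq_def)
  then have "0 < c i + d i * lam k" if "i \<in> {1..m}" for i
    using posdef_eigenvalue_pos[OF posdef[OF that] eigen[OF k]] by blast
  then have "cinner (w (real m)) (psi k) = complex_of_real (exp (- (\<Sum>i=1..m. ?r i))) * cinner (w 0) (psi k)"
    using eigencomponent_piecewise_ode[OF selfadj eigen[OF k] _ cont ode order_refl]
    by (metis less_irrefl)
  also have "\<dots> = complex_of_real (exp (- (\<Sum>i=1..m. ?r i)) * exp (- a0)) * cinner \<phi> (psi k)"
    by (simp add: init cinner_scale_left)
  also have "exp (- (\<Sum>i=1..m. ?r i)) * exp (- a0) = exp (- (a0 + (\<Sum>i=1..m. ?r i)))"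
    by (simp add: exp_add[symmetric])
  finally show "cinner (w (real m)) (psi k)
      = complex_of_real (exp (- (a0 + (\<Sum>i=1..m. ?r i)))) * cinner \<phi> (psi k)" .
qed

theorem theorem3:
  fixes A :: "complex^'n^'n"
    and K :: nat and lam :: "nat \<Rightarrow> real" and psi :: "nat \<Rightarrow> complex^'n"
    and f :: "real \<Rightarrow> real" and \<phi> u :: "complex^'n"
    and m :: nat and a0 :: real and a b c d :: "nat \<Rightarrow> real"
    and \<epsilon>0 \<epsilon>1 :: real
    and w :: "real \<Rightarrow> complex^'n" and wt :: "complex^'n"
  assumes K_def: "K = CARD('n)"
    and selfadj: "\<And>x y. cinner (A *v x) y = cinner x (A *v y)"
    and orthonormal: "\<And>j k. j < K \<Longrightarrow> k < K \<Longrightarrow> cinner (psi j) (psi k) = (if j = k then 1 else 0)"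
    and eigen: "\<And>k. k < K \<Longrightarrow> A *v psi k = complex_of_real (lam k) *s psi k"
    and sorted: "\<And>j k. j \<le> k \<Longrightarrow> k < K \<Longrightarrow> lam j \<le> lam k"
    and lam_pos: "0 < lam 0"
    and f_pos: "\<And>x. x \<in> {lam 0 .. lam (K - 1)} \<Longrightarrow> 0 < f x"
    and u_sol: "opfun f K lam psi u = \<phi>"
    and m_ge: "1 \<le> m"
    and coef1: "\<And>i. i \<in> {1..m} \<Longrightarrow> a i - lam 0 * b i \<ge> 0"
    and coef2: "\<And>i. i \<in> {1..m} \<Longrightarrow> c i - lam 0 * d i > 0"
    and posdef: "\<And>i v. i \<in> {1..m} \<Longrightarrow> v \<noteq> 0 \<Longrightarrow>
        Re (cinner (complex_of_real (c i) *s v + complex_of_real (d i) *s (A *v v)) v) > 0"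
    and eps1: "0 \<le> \<epsilon>1"
    and approx: "\<And>x. x \<in> {lam 0 .. lam (K - 1)} \<Longrightarrow>
        \<bar>(a0 + (\<Sum>i=1..m. (a i + b i * x) / (c i + d i * x))) - ln (f x)\<bar> \<le> \<epsilon>1"
    and w_cont: "continuous_on {0 .. real m} w"
    and w_init: "w 0 = complex_of_real (exp (- a0)) *s \<phi>"
    and w_ode: "\<And>i t. i \<in> {1..m} \<Longrightarrow> t \<in> {real i - 1 <.. real i} \<Longrightarrow>
        \<exists>w'. (w has_vector_derivative w') (at t within {real i - 1 .. real i}) \<and>
             complex_of_real (c i) *s w' + complex_of_real (d i) *s (A *v w')
             + (complex_of_real (a i) *s w t + complex_of_real (b i) *s (A *v w t)) = 0"
    and eps0: "0 \<le> \<epsilon>0"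
    and wt_close: "norm (wt - w (real m)) \<le> \<epsilon>0 * norm \<phi>"
  shows "norm (wt - u) \<le> \<epsilon>0 * norm \<phi>
           + (exp \<epsilon>1 - 1) * Dnorm (opfun (\<lambda>x. inverse (f x ^ 2)) K lam psi) \<phi>"
proof -
  \<comment> \<open>The sign conditions coef1 and coef2 concern the stability of the scheme.\<close>
  have orth: "orthonormal_seq K psi"
    using orthonormal by (simp add: orthonormal_seq_def)
  have lam_range: "lam k \<in> {lam 0 .. lam (K - 1)}" if "k < K" for k
    using sorted[of 0 k] sorted[of k "K - 1"] that by auto
  define s where "s x = a0 + (\<Sum>i=1..m. (a i + b i * x) / (c i + d i * x))" for x
  have u_eq: "u = opfun (\<lambda>x. inverse (f x)) K lam psi \<phi>"
    using f_pos lam_range by (intro opfun_inverse[OF K_def orth _ u_sol]) force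
  have w_eq: "w (real m) = opfun (\<lambda>x. exp (- s x)) K lam psi \<phi>"
    unfolding s_def
    by (rule piecewise_ode_endpoint_eq_opfun[OF K_def orth selfadj eigen posdef w_cont w_init w_ode])
  have "norm (w (real m) - u) \<le> (exp \<epsilon>1 - 1) * Dnorm (opfun (\<lambda>x. inverse (f x) ^ 2) K lam psi) \<phi>"
    unfolding u_eq w_eq opfun_diff
  proof (rule norm_opfun_le_Dnorm[OF orth])
    show "0 \<le> exp \<epsilon>1 - 1"
      using eps1 by simp
    fix k assume "k < K"
    then have "\<bar>exp (- s (lam k)) - inverse (f (lam k))\<bar> \<le> (exp \<epsilon>1 - 1) * inverse (f (lam k))"
      using abs_exp_neg_minus_inverse_le[OF f_pos approx] lam_range unfolding s_def by blast
    then show "\<bar>exp (- s (lam k)) - inverse (f (lam k))\<bar> \<le> (exp \<epsilon>1 - 1) * \<bar>inverse (f (lam k))\<bar>"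
      using f_pos lam_range \<open>k < K\<close> by (simp add: less_imp_le)
  qed
  then show ?thesis
    using wt_close norm_triangle_ineq[of "wt - w (real m)" "w (real m) - u"]
    by (simp add: power_inverse)
qed

end
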